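(* The parallel reduction $\Rightarrow$ on $PPC_{EM}$ terms has the diamond property: for all terms $t,t_1,t_2$, if $t\Rightarrow t_1$ and $t\Rightarrow t_2$, then there exists a term $t_3$ with $t_1\Rightarrow t_3$ and $t_2\Rightarrow t_3$.
   Context: **Terms of $PPC_{EM}$.** Names $x,y,\dots$; $\theta$ ranges over finite lists of names. Terms: $$t ::= x \mid \hat{x} \mid t\,t \mid t\bullet t \mid [\theta]\,p\to b \mid b\langle\theta\vdash\mu\mid\Delta\rangle.$$ Here $x$ is a variable occurrence and $\hat x$ a matchable occurrence of a name. In a matching $b\langle\theta\vdash\mu\mid\Delta\rangle$, $\mu$ is a decided match, i.e. either $\bot$ or a substitution (a finite map from names to terms), and $\Delta$ is a finite multiset of pairs of terms. The notation $(a,p)\Delta$ is the multiset union of $\Delta$ with $\{(a,p)\}$. As a term, $\bot$ denotes a fixed closed normal term without $\bullet$ or matchings. **Binding and free names.** In $[\theta]p\to b$, $\theta$ binds matchables $\hat x$ ($x\in\theta$) in $p$ and variables $x\in\theta$ in $b$. In $b\langle\theta\vdash\mu\mid\Delta\rangle$, $\theta$ binds variables of $b$ and matchables in the second components of the pairs of $\Delta$. $\mathrm{fn}(a)$ is the set of free names of $a$. Terms are taken modulo $\alpha$-conversion, with all bound names distinct and disjoint from free names. **Substitution.** $t^\sigma$ is capture-avoiding replacement of free variables $x\in\mathrm{dom}(\sigma)$ by $\sigma(x)$, propagating into $\mathrm{codom}\,\mu$ and into $\Delta$. **Disjoint union $\uplus$ of decided matches.** It is commutative; $\bot\uplus\mu=\bot$;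 $\sigma_1\uplus\sigma_2=\bot$ if the domains overlap, and otherwise it is their union. **Failure pairs.** Call $(a,p)$ a *failure pair* (relative to $\theta$) if it is one of: - $(\hat y,\hat x)$ with $x\notin\theta$ and $x\ne y$; - $(a_1\bullet a_2,\hat x)$ with $x\notin\theta$; - $([\theta_a]p_a\to b_a,\hat x)$ with $x\notin\theta$; - $(\hat x,p_1\bullet p_2)$; - $([\theta_a]p_a\to b_a,p_1\bullet p_2)$; - $(a,[\theta_p]p_p\to b_p)$. **Parallel reduction $\Rightarrow$.** It is defined inductively on terms. It is extended to decided matches by $\bot\Rightarrow\bot$ and $\sigma\Rightarrow\sigma'$ iff $\mathrm{dom}\,\sigma=\mathrm{dom}\,\sigma'$ and $\sigma(x)\Rightarrow\sigma'(x)$ for all $x$. It is extended to multisets of pairs elementwise, componentwise. The rules are: - (Id) $t\Rightarrow t$. - (Cgr) If $t_1\Rightarrow t_1'$ and $t_2\Rightarrow t_2'$, then $t_1t_2\Rightarrow t_1't_2'$ and $t_1\bullet t_2\Rightarrow t_1'\bullet t_2'$. - (Cgr) If $p\Rightarrow p'$ and $b\Rightarrow b'$, then $[\theta]p\to b\Rightarrow[\theta]p'\to b'$. - (Cgr) If $b\Rightarrow b'$, $\mu\Rightarrow\mu'$ and $\Delta\Rightarrow\Delta'$, then $b\langle\theta\vdash\mu\mid\Delta\rangle\Rightarrow b'\langle\theta\vdash\mu'\mid\Delta'\rangle$. - (Init) If $p\Rightarrow p'$, $b\Rightarrow b'$ and $a\Rightarrow a'$, then $([\theta]p\to b)a\Rightarrow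 b'\langle\theta\vdash\emptyset\mid(a',p')\rangle$. - (Struct) If $t\Rightarrow t'$, then $\hat x\,t\Rightarrow\hat x\bullet t'$. - (Struct) If $t_i\Rightarrow t_i'$ for $i=1,2,3$, then $(t_1\bullet t_2)t_3\Rightarrow(t_1'\bullet t_2')\bullet t_3'$. - (Match) If $b\Rightarrow b'$, $\mu\Rightarrow\mu'$, $a\Rightarrow a'$ and $\Delta\Rightarrow\Delta'$, with $x\in\theta$ and $\mathrm{fn}(a)\cap\theta=\emptyset$, then $b\langle\theta\vdash\mu\mid(a,\hat x)\Delta\rangle\Rightarrow b'\langle\theta\vdash\mu'\uplus\{x\mapsto a'\}\mid\Delta'\rangle$. - (Match) If $b\Rightarrow b'$, $\mu\Rightarrow\mu'$ and $\Delta\Rightarrow\Delta'$, with $x\notin\theta$, then $b\langle\theta\vdash\mu\mid(\hat x,\hat x)\Delta\rangle\Rightarrow b'\langle\theta\vdash\mu'\mid\Delta'\rangle$. - (Match) If $b\Rightarrow b'$, $\mu\Rightarrow\mu'$, $\Delta\Rightarrow\Delta'$, $a_i\Rightarrow a_i'$ and $p_i\Rightarrow p_i'$, then $b\langle\theta\vdash\mu\mid(a_1\bullet a_2,p_1\bullet p_2)\Delta\rangle\Rightarrow b'\langle\theta\vdash\mu'\mid(a_1',p_1')(a_2',p_2')\Delta'\rangle$. - (Match) If $b\Rightarrow b'$ and $\Delta\Rightarrow\Delta'$, with $(a,p)$ a failure pair, then $b\langle\theta\vdash\mu\mid(a,p)\Delta\rangle\Rightarrow b'\langle\theta\vdash\bot\mid\Delta'\rangle$.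 - (Res) If $b\Rightarrow b'$ and $\sigma\Rightarrow\sigma'$, with $\mathrm{dom}\,\sigma=\theta$, then $b\langle\theta\vdash\sigma\mid\emptyset\rangle\Rightarrow(b')^{\sigma'}$. - (Res) If $\mathrm{dom}\,\sigma\ne\theta$, then $b\langle\theta\vdash\sigma\mid\emptyset\rangle\Rightarrow\bot$. - (Res) $b\langle\theta\vdash\bot\mid\Delta\rangle\Rightarrow\bot$. *)

theory Defs
  imports Main "HOL-Library.Multiset" "HOL-Library.Finite_Map"
begin

text \<open>
  Terms of PPC_EM, represented with de Bruijn indices (terms modulo alpha-conversion).
  There are two independent index name-spaces: one for variable occurrences (Var)
  and one for matchable occurrences (Mat), because a binder theta binds variables
  and matchables in different regions:
  \<^item> Abs n p b  is  [theta] p -> b  with  n = length theta:  theta binds matchables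
    in p (matchable depth + n) and variables in b (variable depth + n).
  \<^item> Mtch b n mu Delta  is  b<theta |- mu | Delta>  with n = length theta:  theta binds
    variables of b (variable depth + n) and matchables of the second components of
    the pairs of Delta (matchable depth + n).  First components and the codomain of mu
    are outside the scope of theta.
  Within theta the names are numbered 0..n-1; a decided match mu is either None (bottom)
  or a finite map from names to terms, where key i < n denotes the i-th name of theta and a
  key i >= n denotes some name not in theta.
\<close>

datatype trm =
    Var nat
  | Mat nat
  | App trm trm
  | Cmp trm trm
  | Abs nat trm trm
  | Mtch trm nat "(nat, trm) fmap option" "(trm \<times> trm) multiset"

primrec shiftV :: "nat \<Rightarrow> nat \<Rightarrow> trm \<Rightarrow> trm" where
  "shiftV k c (Var i) = (if i < c then Var i else Var (i + k))"
| "shiftV k c (Mat i) = Mat i"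
| "shiftV k c (App s t) = App (shiftV k c s) (shiftV k c t)"
| "shiftV k c (Cmp s t) = Cmp (shiftV k c s) (shiftV k c t)"
| "shiftV k c (Abs n p b) = Abs n (shiftV k c p) (shiftV k (c + n) b)"
| "shiftV k c (Mtch b n mu D) =
     Mtch (shiftV k (c + n) b) n (map_option (fmmap (shiftV k c)) mu)
          (image_mset (map_prod (shiftV k c) (shiftV k c)) D)"

primrec shiftM :: "nat \<Rightarrow> nat \<Rightarrow> trm \<Rightarrow> trm" where
  "shiftM k c (Var i) = Var i"
| "shiftM k c (Mat i) = (if i < c then Mat i else Mat (i + k))"
| "shiftM k c (App s t) = App (shiftM k c s) (shiftM k c t)"
| "shiftM k c (Cmp s t) = Cmp (shiftM k c s) (shiftM k c t)"
| "shiftM k c (Abs n p b) = Abs n (shiftM k (c + n) p) (shiftM k c b)"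
| "shiftM k c (Mtch b n mu D) =
     Mtch (shiftM k c b) n (map_option (fmmap (shiftM k c)) mu)
          (image_mset (map_prod (shiftM k c) (shiftM k (c + n))) D)"

text \<open>Capture-avoiding substitution of the n variables bound at variable depth cv
  (matchable depth cm) by the terms s 0, ..., s (n-1) (living outside the binder);
  the binder disappears, so free variables above are decremented by n.\<close>
primrec substV :: "nat \<Rightarrow> nat \<Rightarrow> nat \<Rightarrow> (nat \<Rightarrow> trm) \<Rightarrow> trm \<Rightarrow> trm" where
  "substV cv cm n s (Var i) =
     (if i < cv then Var i
      else if i < cv + n then shiftM cm 0 (shiftV cv 0 (s (i - cv)))
      else Var (i - n))"
| "substV cv cm n s (Mat i) = Mat i"
| "substV cv cm n s (App t u) = App (substV cv cm n s t) (substV cv cm n s u)"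
| "substV cv cm n s (Cmp t u) = Cmp (substV cv cm n s t) (substV cv cm n s u)"
| "substV cv cm n s (Abs k p b) = Abs k (substV cv (cm + k) n s p) (substV (cv + k) cm n s b)"
| "substV cv cm n s (Mtch b k mu D) =
     Mtch (substV (cv + k) cm n s b) k (map_option (fmmap (substV cv cm n s)) mu)
          (image_mset (map_prod (substV cv cm n s) (substV cv (cm + k) n s)) D)"

definition inst :: "nat \<Rightarrow> (nat, trm) fmap \<Rightarrow> trm \<Rightarrow> trm" where
  "inst n \<sigma> b = substV 0 0 n (\<lambda>i. the (fmlookup \<sigma> i)) b"

definition dunion :: "(nat, trm) fmap option \<Rightarrow> (nat, trm) fmap option \<Rightarrow> (nat, trm) fmap option" where
  "dunion m1 m2 = (case (m1, m2) of
       (Some s1, Some s2) \<Rightarrow> (if fmdom' s1 \<inter> fmdom' s2 = {} then Some (s1 ++\<^sub>f s2) else None)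
     | _ \<Rightarrow> None)"

text \<open>In a pair (a, p), a lives outside
  theta and p inside; a matchable Mat i in p with i >= n is the free (w.r.t. theta) name
  that appears as Mat (i - n) outside.\<close>
fun failure_pair :: "nat \<Rightarrow> trm \<times> trm \<Rightarrow> bool" where
  "failure_pair n (Mat j, Mat i) = (n \<le> i \<and> j \<noteq> i - n)"
| "failure_pair n (Cmp a1 a2, Mat i) = (n \<le> i)"
| "failure_pair n (Abs k pa ba, Mat i) = (n \<le> i)"
| "failure_pair n (Mat j, Cmp p1 p2) = True"
| "failure_pair n (Abs k pa ba, Cmp p1 p2) = True"
| "failure_pair n (a, Abs k pp bp) = True"
| "failure_pair n _ = False"

inductive par :: "trm \<Rightarrow> trm \<Rightarrow> trm \<Rightarrow> bool" for bot :: trm where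
  Id: "par bot t t"
| CgrApp: "par bot t1 t1' \<Longrightarrow> par bot t2 t2' \<Longrightarrow> par bot (App t1 t2) (App t1' t2')"
| CgrCmp: "par bot t1 t1' \<Longrightarrow> par bot t2 t2' \<Longrightarrow> par bot (Cmp t1 t2) (Cmp t1' t2')"
| CgrAbs: "par bot p p' \<Longrightarrow> par bot b b' \<Longrightarrow> par bot (Abs n p b) (Abs n p' b')"
| CgrMtch: "par bot b b' \<Longrightarrow> rel_option (fmrel (par bot)) mu mu' \<Longrightarrow>
     rel_mset (rel_prod (par bot) (par bot)) D D' \<Longrightarrow>
     par bot (Mtch b n mu D) (Mtch b' n mu' D')"
| Init: "par bot p p' \<Longrightarrow> par bot b b' \<Longrightarrow> par bot a a' \<Longrightarrow>
     par bot (App (Abs n p b) a) (Mtch b' n (Some fmempty) {#(a', p')#})"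
| StructMat: "par bot t t' \<Longrightarrow> par bot (App (Mat x) t) (Cmp (Mat x) t')"
| StructCmp: "par bot t1 t1' \<Longrightarrow> par bot t2 t2' \<Longrightarrow> par bot t3 t3' \<Longrightarrow>
     par bot (App (Cmp t1 t2) t3) (Cmp (Cmp t1' t2') t3')"
| MatchBind: "par bot b b' \<Longrightarrow> rel_option (fmrel (par bot)) mu mu' \<Longrightarrow> par bot a a' \<Longrightarrow>
     rel_mset (rel_prod (par bot) (par bot)) D D' \<Longrightarrow> x < n \<Longrightarrow>
     par bot (Mtch b n mu (add_mset (a, Mat x) D))
             (Mtch b' n (dunion mu' (Some (fmupd x a' fmempty))) D')"
| MatchMat: "par bot b b' \<Longrightarrow> rel_option (fmrel (par bot)) mu mu' \<Longrightarrow>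
     rel_mset (rel_prod (par bot) (par bot)) D D' \<Longrightarrow> n \<le> x \<Longrightarrow>
     par bot (Mtch b n mu (add_mset (Mat (x - n), Mat x) D)) (Mtch b' n mu' D')"
| MatchCmp: "par bot b b' \<Longrightarrow> rel_option (fmrel (par bot)) mu mu' \<Longrightarrow>
     rel_mset (rel_prod (par bot) (par bot)) D D' \<Longrightarrow>
     par bot a1 a1' \<Longrightarrow> par bot a2 a2' \<Longrightarrow> par bot p1 p1' \<Longrightarrow> par bot p2 p2' \<Longrightarrow>
     par bot (Mtch b n mu (add_mset (Cmp a1 a2, Cmp p1 p2) D))
             (Mtch b' n mu' (add_mset (a1', p1') (add_mset (a2', p2') D')))"
| MatchFail: "par bot b b' \<Longrightarrow> rel_mset (rel_prod (par bot) (par bot)) D D' \<Longrightarrow>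
     failure_pair n (a, p) \<Longrightarrow>
     par bot (Mtch b n mu (add_mset (a, p) D)) (Mtch b' n None D')"
| ResOk: "par bot b b' \<Longrightarrow> fmrel (par bot) \<sigma> \<sigma>' \<Longrightarrow> fmdom' \<sigma> = {..<n} \<Longrightarrow>
     par bot (Mtch b n (Some \<sigma>) {#}) (inst n \<sigma>' b')"
| ResDom: "fmdom' \<sigma> \<noteq> {..<n} \<Longrightarrow> par bot (Mtch b n (Some \<sigma>) {#}) bot"
| ResBot: "par bot (Mtch b n None D) bot"
monos multiset.rel_mono fmap.rel_mono option.rel_mono prod.rel_mono

text \<open>For terms without
  compounds and matchings the only redexes are applications headed by an abstraction
  (Init) or by a matchable (Struct).\<close>
primrec pure_closed :: "nat \<Rightarrow> nat \<Rightarrow> trm \<Rightarrow> bool" where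
  "pure_closed cv cm (Var i) = (i < cv)"
| "pure_closed cv cm (Mat i) = (i < cm)"
| "pure_closed cv cm (App s t) = (pure_closed cv cm s \<and> pure_closed cv cm t)"
| "pure_closed cv cm (Cmp s t) = False"
| "pure_closed cv cm (Abs n p b) = (pure_closed cv (cm + n) p \<and> pure_closed (cv + n) cm b)"
| "pure_closed cv cm (Mtch b n mu D) = False"

primrec pure_normal :: "trm \<Rightarrow> bool" where
  "pure_normal (Var i) = True"
| "pure_normal (Mat i) = True"
| "pure_normal (App s t) = (pure_normal s \<and> pure_normal t \<and>
     (case s of Abs _ _ _ \<Rightarrow> False | Mat _ \<Rightarrow> False | _ \<Rightarrow> True))"
| "pure_normal (Cmp s t) = False"
| "pure_normal (Abs n p b) = (pure_normal p \<and> pure_normal b)"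
| "pure_normal (Mtch b n mu D) = False"

end

theory Submission
  imports Defs
begin

(*
  The diamond property is established pointwise, by structural induction on the source term:
  diamond_at (par bot) t follows from the diamond property at the immediate subterms.
  For an application the rules CgrApp, Init and Struct are joined case by case.  In a matching
  every Match rule consumes a single pair of Delta: two steps on the same pair are joined using the
  induction hypothesis on its components, two steps on different pairs commute, and the parallel
  reductions of the remaining pairs and of the decided match are joined by lifting the induction
  hypothesis through multisets and finite maps.  Joining a Res step requires parallel reduction to
  be preserved by substitution; this holds because bot is closed, hence fixed by shifting and
  substitution.
*)

type_synonym decided_match = "(nat, trm) fmap option"

section \<open>Relators and the local diamond property\<close>

lemma fmrel_fmmap:
  "fmrel R m m' \<Longrightarrow> (\<And>x y. R x y \<Longrightarrow> S (f x) (g y)) \<Longrightarrow> fmrel S (fmmap f m) (fmmap g m')"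
  by (auto simp: fmap.rel_map elim!: fmap.rel_mono_strong)

lemma rel_mset_plus: "rel_mset R A A' \<Longrightarrow> rel_mset R B B' \<Longrightarrow> rel_mset R (A + B) (A' + B')"
  by (induction rule: rel_mset_induct) (auto intro: rel_mset_Plus)

lemma rel_option_fmrel_map:
  "rel_option (fmrel R) m m' \<Longrightarrow> (\<And>x y. R x y \<Longrightarrow> S (f x) (g y)) \<Longrightarrow>
   rel_option (fmrel S) (map_option (fmmap f) m) (map_option (fmmap g) m')"
  by (auto simp: option.rel_map fmap.rel_map elim!: option.rel_mono_strong fmap.rel_mono_strong)

lemma rel_mset_rel_prod_map:
  "rel_mset (rel_prod R R) M M' \<Longrightarrow> (\<And>x y. R x y \<Longrightarrow> S (f1 x) (g1 y)) \<Longrightarrow>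
   (\<And>x y. R x y \<Longrightarrow> S (f2 x) (g2 y)) \<Longrightarrow>
   rel_mset (rel_prod S S) (image_mset (map_prod f1 f2) M) (image_mset (map_prod g1 g2) M')"
  by (auto simp: multiset.rel_map elim!: multiset.rel_mono_strong)

definition diamond_at :: "('a \<Rightarrow> 'a \<Rightarrow> bool) \<Rightarrow> 'a \<Rightarrow> bool" where
  "diamond_at R x \<longleftrightarrow> (\<forall>y z. R x y \<longrightarrow> R x z \<longrightarrow> (\<exists>w. R y w \<and> R z w))"

lemma diamond_atD: "diamond_at R x \<Longrightarrow> R x y \<Longrightarrow> R x z \<Longrightarrow> \<exists>w. R y w \<and> R z w"
  unfolding diamond_at_def by blast

text \<open>Restricting R to sources with the diamond property lets the diamond be lifted through any
  relator by its composition and converse laws.\<close>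

lemma diamond_at_restrict_le:
  "(\<lambda>x y. R x y \<and> diamond_at R x)\<inverse>\<inverse> OO (\<lambda>x y. R x y \<and> diamond_at R x) \<le> R OO R\<inverse>\<inverse>"
  by (auto dest: diamond_atD)

lemma diamond_at_fmrel:
  assumes "\<And>x. x \<in> fmran' m \<Longrightarrow> diamond_at R x"
  shows "diamond_at (fmrel R) m"
  unfolding diamond_at_def
proof (intro allI impI)
  fix m1 m2 assume "fmrel R m m1" "fmrel R m m2"
  let ?S = "\<lambda>x y. R x y \<and> diamond_at R x"
  have "fmrel ?S m m1" "fmrel ?S m m2"
    using \<open>fmrel R m m1\<close> \<open>fmrel R m m2\<close> assms by (auto elim!: fmap.rel_mono_strong)
  then have "fmrel (?S\<inverse>\<inverse> OO ?S) m1 m2"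
    by (auto simp: fmap.rel_compp fmap.rel_conversep)
  then have "fmrel (R OO R\<inverse>\<inverse>) m1 m2"
    using fmap.rel_mono[OF diamond_at_restrict_le[of R]] by blast
  then show "\<exists>m3. fmrel R m1 m3 \<and> fmrel R m2 m3"
    by (auto simp: fmap.rel_compp fmap.rel_conversep)
qed

lemma diamond_at_rel_mset:
  assumes "\<And>x. x \<in># M \<Longrightarrow> diamond_at R x"
  shows "diamond_at (rel_mset R) M"
  unfolding diamond_at_def
proof (intro allI impI)
  fix M1 M2 assume "rel_mset R M M1" "rel_mset R M M2"
  let ?S = "\<lambda>x y. R x y \<and> diamond_at R x"
  have "rel_mset ?S M M1" "rel_mset ?S M M2"
    using \<open>rel_mset R M M1\<close> \<open>rel_mset R M M2\<close> assms by (auto elim!: multiset.rel_mono_strong)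
  then have "rel_mset (?S\<inverse>\<inverse> OO ?S) M1 M2"
    by (auto simp: multiset.rel_compp multiset.rel_conversep)
  then have "rel_mset (R OO R\<inverse>\<inverse>) M1 M2"
    using multiset.rel_mono[OF diamond_at_restrict_le[of R]] by blast
  then show "\<exists>M3. rel_mset R M1 M3 \<and> rel_mset R M2 M3"
    by (auto simp: multiset.rel_compp multiset.rel_conversep)
qed

lemma diamond_at_rel_option:
  assumes "\<And>x. x \<in> set_option m \<Longrightarrow> diamond_at R x"
  shows "diamond_at (rel_option R) m"
  using assms unfolding diamond_at_def
  by (cases m) (auto simp: option_rel_Some1 option_rel_Some2 rel_option_None1, metis)

lemma diamond_at_rel_prod:
  "diamond_at R a \<Longrightarrow> diamond_at S b \<Longrightarrow> diamond_at (rel_prod R S) (a, b)"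
  unfolding diamond_at_def rel_prod_sel by (metis fst_conv snd_conv)

lemma diamond_at_congruence_iff:
  assumes inv: "\<And>x y z. R (c x y) z \<longleftrightarrow> (\<exists>x' y'. z = c x' y' \<and> R x x' \<and> R y y')"
    and inj: "\<And>x y x' y'. c x y = c x' y' \<Longrightarrow> x = x' \<and> y = y'"
    and refl: "\<And>x. R x x"
  shows "diamond_at R (c x y) \<longleftrightarrow> diamond_at R x \<and> diamond_at R y"
proof
  assume d: "diamond_at R (c x y)"
  have join: "\<exists>x3 y3. R x1 x3 \<and> R x2 x3 \<and> R y1 y3 \<and> R y2 y3"
    if "R x x1" "R x x2" "R y y1" "R y y2" for x1 x2 y1 y2
  proof -
    have "R (c x y) (c x1 y1)" "R (c x y) (c x2 y2)" using inv[of x y] that by blast+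
    then obtain w where w: "R (c x1 y1) w" "R (c x2 y2) w" using diamond_atD[OF d] by blast
    obtain x3 y3 where "w = c x3 y3" "R x1 x3" "R y1 y3" using inv[of x1 y1 w] w(1) by blast
    moreover obtain x3' y3' where "w = c x3' y3'" "R x2 x3'" "R y2 y3'" using inv[of x2 y2 w] w(2) by blast
    ultimately show ?thesis using inj[of x3 y3 x3' y3'] by auto
  qed
  have "diamond_at R x" unfolding diamond_at_def by (metis join refl)
  moreover have "diamond_at R y" unfolding diamond_at_def by (metis join refl)
  ultimately show "diamond_at R x \<and> diamond_at R y" ..
next
  assume xy: "diamond_at R x \<and> diamond_at R y"
  show "diamond_at R (c x y)"
    unfolding diamond_at_def
  proof (intro allI impI)
    fix z1 z2 assume "R (c x y) z1" "R (c x y) z2"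
    then obtain x1 y1 x2 y2 where z: "z1 = c x1 y1" "z2 = c x2 y2"
      and r: "R x x1" "R y y1" "R x x2" "R y y2"
      using inv[of x y] by blast
    obtain x3 where "R x1 x3" "R x2 x3" using diamond_atD[OF conjunct1[OF xy] r(1,3)] by blast
    moreover obtain y3 where "R y1 y3" "R y2 y3" using diamond_atD[OF conjunct2[OF xy] r(2,4)] by blast
    ultimately have "R z1 (c x3 y3)" "R z2 (c x3 y3)" using z inv by blast+
    then show "\<exists>w. R z1 w \<and> R z2 w" by blast
  qed
qed

section \<open>Shifting and substitution\<close>

lemmas nested_map_simps = fmap.map_comp option.map_comp multiset.map_comp prod.map_comp o_def
lemmas nested_map_congs = option.map_cong fmap.map_cong multiset.map_cong prod.map_cong

lemma shiftV_shiftM_commute: "shiftV k c (shiftM j d t) = shiftM j d (shiftV k c t)"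
  by (induction t arbitrary: c d) (auto simp: nested_map_simps intro!: nested_map_congs)

lemma shiftV_shiftV_commute:
  "j + d \<le> c \<Longrightarrow> shiftV k c (shiftV j d t) = shiftV j d (shiftV k (c - j) t)"
  by (induction t arbitrary: c d) (auto simp: nested_map_simps intro!: nested_map_congs)

lemma shiftM_shiftM_commute:
  "j + d \<le> c \<Longrightarrow> shiftM k c (shiftM j d t) = shiftM j d (shiftM k (c - j) t)"
  by (induction t arbitrary: c d) (auto simp: nested_map_simps intro!: nested_map_congs)

lemma shiftV_shiftV_merge: "d \<le> c \<Longrightarrow> c \<le> j + d \<Longrightarrow> shiftV k c (shiftV j d t) = shiftV (k + j) d t"
  by (induction t arbitrary: c d) (auto simp: nested_map_simps intro!: nested_map_congs)

lemma shiftM_shiftM_merge: "d \<le> c \<Longrightarrow> c \<le> j + d \<Longrightarrow> shiftM k c (shiftM j d t) = shiftM (k + j) d t"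
  by (induction t arbitrary: c d) (auto simp: nested_map_simps intro!: nested_map_congs)

lemma shiftV_substV:
  "shiftV k (c + cv) (substV cv cm n s t) = substV cv cm n (\<lambda>i. shiftV k c (s i)) (shiftV k (c + n + cv) t)"
  by (induction t arbitrary: cv cm)
    (auto simp: nested_map_simps add.assoc shiftV_shiftM_commute shiftV_shiftV_commute intro!: nested_map_congs)

lemma shiftM_substV:
  "shiftM k (c + cm) (substV cv cm n s t) = substV cv cm n (\<lambda>i. shiftM k c (s i)) (shiftM k (c + cm) t)"
  by (induction t arbitrary: cv cm)
    (auto simp: nested_map_simps add.assoc shiftV_shiftM_commute shiftM_shiftM_commute intro!: nested_map_congs)

lemma substV_shiftV: "c + d \<le> cv \<Longrightarrow> substV cv cm n s (shiftV d c t) = shiftV d c (substV (cv - d) cm n s t)"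
  by (induction t arbitrary: cv cm c)
    (auto simp: nested_map_simps shiftV_shiftM_commute shiftV_shiftV_merge intro!: nested_map_congs)

lemma substV_shiftM: "c + d \<le> cm \<Longrightarrow> substV cv cm n s (shiftM d c t) = shiftM d c (substV cv (cm - d) n s t)"
  by (induction t arbitrary: cv cm c)
    (auto simp: nested_map_simps shiftV_shiftM_commute shiftM_shiftM_merge intro!: nested_map_congs)

lemma substV_shift_cancel: "c \<le> d \<Longrightarrow> d + n \<le> c + k \<Longrightarrow>
  substV d e n s (shiftM j c' (shiftV k c t)) = shiftM j c' (shiftV (k - n) c t)"
  by (induction t arbitrary: c d e c') (auto simp: nested_map_simps intro!: nested_map_congs)

lemma substV_substV:
  "substV (cv + d) (cm + e) m s (substV d e n \<sigma> t) =
   substV d e n (\<lambda>i. substV cv cm m s (\<sigma> i)) (substV (cv + n + d) (cm + e) m s t)"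
  by (induction t arbitrary: d e)
    (auto simp: nested_map_simps add.assoc shiftV_shiftM_commute substV_shiftV substV_shiftM
      substV_shift_cancel intro!: nested_map_congs, simp_all add: ac_simps)

lemma substV_cong: "(\<And>i. i < n \<Longrightarrow> s i = s' i) \<Longrightarrow> substV cv cm n s t = substV cv cm n s' t"
  by (induction t arbitrary: cv cm) (auto simp: nested_map_simps intro!: nested_map_congs)

lemma shiftV_closed: "pure_closed cv cm t \<Longrightarrow> cv \<le> c \<Longrightarrow> shiftV k c t = t"
  by (induction t arbitrary: cv cm c) auto

lemma shiftM_closed: "pure_closed cv cm t \<Longrightarrow> cm \<le> c \<Longrightarrow> shiftM k c t = t"
  by (induction t arbitrary: cv cm c) auto

lemma substV_closed: "pure_closed cv cm t \<Longrightarrow> cv \<le> c \<Longrightarrow> substV c e n s t = t"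
  by (induction t arbitrary: cv cm c e) auto

lemma the_map_option_fmlookup:
  "i \<in> fmdom' \<sigma> \<Longrightarrow> the (map_option f (fmlookup \<sigma> i)) = f (the (fmlookup \<sigma> i))"
  by (auto simp: fmlookup_dom'_iff)

lemma shiftV_inst: "fmdom' \<sigma> = {..<n} \<Longrightarrow>
  shiftV k c (inst n \<sigma> b) = inst n (fmmap (shiftV k c) \<sigma>) (shiftV k (c + n) b)"
  using shiftV_substV[of k c 0 0 n _ b]
  by (auto simp: inst_def the_map_option_fmlookup intro!: substV_cong)

lemma shiftM_inst: "fmdom' \<sigma> = {..<n} \<Longrightarrow>
  shiftM k c (inst n \<sigma> b) = inst n (fmmap (shiftM k c) \<sigma>) (shiftM k c b)"
  using shiftM_substV[of k c 0 0 n _ b]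
  by (auto simp: inst_def the_map_option_fmlookup intro!: substV_cong)

lemma substV_inst: "fmdom' \<sigma> = {..<n} \<Longrightarrow>
  substV cv cm m s (inst n \<sigma> b) = inst n (fmmap (substV cv cm m s) \<sigma>) (substV (cv + n) cm m s b)"
  using substV_substV[of cv 0 cm 0 m s n _ b]
  by (auto simp: inst_def the_map_option_fmlookup intro!: substV_cong)

section \<open>Parallel reduction is substitutive\<close>

abbreviation par_match :: "trm \<Rightarrow> decided_match \<Rightarrow> decided_match \<Rightarrow> bool" where
  "par_match bt \<equiv> rel_option (fmrel (par bt))"

abbreviation par_pairs :: "trm \<Rightarrow> (trm \<times> trm) multiset \<Rightarrow> (trm \<times> trm) multiset \<Rightarrow> bool" where
  "par_pairs bt \<equiv> rel_mset (rel_prod (par bt) (par bt))"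

lemma par_match_refl [simp]: "par_match bt m m"
  by (auto intro!: option.rel_refl fmap.rel_refl par.Id)

lemma par_pairs_refl [simp]: "par_pairs bt M M"
  by (auto intro!: multiset.rel_refl par.Id)

lemma par_VarD: "par bt (Var x) t \<Longrightarrow> t = Var x"
  by (erule par.cases) auto

lemma par_MatD: "par bt (Mat x) t \<Longrightarrow> t = Mat x"
  by (erule par.cases) auto

lemma par_CmpE:
  assumes "par bt (Cmp a b) t"
  obtains a' b' where "t = Cmp a' b'" "par bt a a'" "par bt b b'"
  using assms by (cases rule: par.cases) (auto intro: par.Id)

lemma par_AbsE:
  assumes "par bt (Abs n p b) t"
  obtains p' b' where "t = Abs n p' b'" "par bt p p'" "par bt b b'"
  using assms by (cases rule: par.cases) (auto intro: par.Id)

lemma par_AppE: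
  assumes "par bt (App u v) t"
  obtains (Cgr) u' v' where "t = App u' v'" "par bt u u'" "par bt v v'"
  | (Init) n p b p' b' v' where "u = Abs n p b" "t = Mtch b' n (Some fmempty) {#(v', p')#}"
      "par bt p p'" "par bt b b'" "par bt v v'"
  | (StructMat) x v' where "u = Mat x" "t = Cmp (Mat x) v'" "par bt v v'"
  | (StructCmp) u1 u2 u1' u2' v' where "u = Cmp u1 u2" "t = Cmp (Cmp u1' u2') v'"
      "par bt u1 u1'" "par bt u2 u2'" "par bt v v'"
  using assms by (cases rule: par.cases) (auto intro: par.Id)

lemma failure_pair_par:
  "failure_pair n (a, p) \<Longrightarrow> par bt a a' \<Longrightarrow> par bt p p' \<Longrightarrow> failure_pair n (a', p')"
  by (cases "(n, (a, p))" rule: failure_pair.cases) (auto dest!: par_MatD elim!: par_CmpE par_AbsE)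

lemma map_option_fmmap_dunion:
  "map_option (fmmap f) (dunion m1 m2) = dunion (map_option (fmmap f) m1) (map_option (fmmap f) m2)"
  by (auto simp: dunion_def split: option.splits)

lemma fmmap_singleton [simp]: "fmmap f (fmupd x a fmempty) = fmupd x (f a) fmempty"
  by (rule fmap_ext) simp

text \<open>The common shape of shiftV, shiftM and substV: F cv cm acts at variable depth cv and
  matchable depth cm, and mat cm is its action on matchable indices.\<close>

locale structural_map =
  fixes bt :: trm and mat :: "nat \<Rightarrow> nat \<Rightarrow> nat" and F :: "nat \<Rightarrow> nat \<Rightarrow> trm \<Rightarrow> trm"
  assumes map_Mat [simp]: "F cv cm (Mat i) = Mat (mat cm i)"
    and map_App [simp]: "F cv cm (App s t) = App (F cv cm s) (F cv cm t)"
    and map_Cmp [simp]: "F cv cm (Cmp s t) = Cmp (F cv cm s) (F cv cm t)"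
    and map_Abs [simp]: "F cv cm (Abs n p b) = Abs n (F cv (cm + n) p) (F (cv + n) cm b)"
    and map_Mtch [simp]: "F cv cm (Mtch b n mu D) =
      Mtch (F (cv + n) cm b) n (map_option (fmmap (F cv cm)) mu)
        (image_mset (map_prod (F cv cm) (F cv (cm + n))) D)"
    and map_bot [simp]: "F cv cm bt = bt"
    and map_inst: "fmdom' \<sigma> = {..<n} \<Longrightarrow>
      F cv cm (inst n \<sigma> b) = inst n (fmmap (F cv cm) \<sigma>) (F (cv + n) cm b)"
    and mat_bound: "i < n \<Longrightarrow> mat (cm + n) i = i"
    and mat_shift: "mat (cm + n) (i + n) = mat cm i + n"
    and mat_inj: "inj (mat cm)"
begin

lemma mat_above: "n \<le> i \<Longrightarrow> mat (cm + n) i = mat cm (i - n) + n"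
  using mat_shift[of cm n "i - n"] by simp

lemma failure_pair_map: "failure_pair n (a, p) \<Longrightarrow> failure_pair n (F cv cm a, F cv (cm + n) p)"
  by (cases "(n, (a, p))" rule: failure_pair.cases)
    (auto simp: mat_above inj_eq[OF mat_inj])

end

locale par_map = F: structural_map bt mat F + G: structural_map bt mat G for bt mat F G +
  assumes par_map_Var: "par bt (F cv cm (Var i)) (G cv cm (Var i))"
begin

lemma par_map_refl: "par bt (F cv cm t) (G cv cm t)"
proof (induction t arbitrary: cv cm)
  case (Mtch b n mu D)
  have "par_match bt (map_option (fmmap (F cv cm)) mu) (map_option (fmmap (G cv cm)) mu)"
    using Mtch.IH(2) by (auto simp: option.rel_map fmap.rel_map
      intro!: option.rel_refl_strong fmap.rel_refl_strong)
  moreover have "par_pairs bt (image_mset (map_prod (F cv cm) (F cv (cm + n))) D)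
     (image_mset (map_prod (G cv cm) (G cv (cm + n))) D)"
    using Mtch.IH(3,4) by (auto simp: multiset.rel_map intro!: multiset.rel_refl_strong)
  ultimately show ?case using Mtch.IH(1) by (simp add: par.CgrMtch)
qed (simp_all add: par_map_Var par.intros)

lemma par_map: "par bt t t' \<Longrightarrow> par bt (F cv cm t) (G cv cm t')"
proof (induction arbitrary: cv cm rule: par.induct)
  case (Id t)
  show ?case by (rule par_map_refl)
next
  case (CgrMtch b b' mu mu' D D' n)
  then show ?case
    by (auto intro!: par.CgrMtch rel_option_fmrel_map[OF CgrMtch.IH(2)]
      rel_mset_rel_prod_map[OF CgrMtch.IH(3)])
next
  case (MatchBind b b' mu mu' a a' D D' x n)
  then show ?case
    using par.MatchBind[OF MatchBind.IH(1) rel_option_fmrel_map[OF MatchBind.IH(2)] MatchBind.IH(3)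
      rel_mset_rel_prod_map[OF MatchBind.IH(4)] MatchBind.hyps(3)]
    by (auto simp: F.mat_bound map_option_fmmap_dunion)
next
  case (MatchMat b b' mu mu' D D' n x)
  then show ?case
    using par.MatchMat[OF MatchMat.IH(1) rel_option_fmrel_map[OF MatchMat.IH(2)]
      rel_mset_rel_prod_map[OF MatchMat.IH(3)], where x = "mat cm (x - n) + n" and n = n]
    by (auto simp: F.mat_above)
next
  case (MatchCmp b b' mu mu' D D' a1 a1' a2 a2' p1 p1' p2 p2' n)
  then show ?case
    using par.MatchCmp[OF MatchCmp.IH(1) rel_option_fmrel_map[OF MatchCmp.IH(2)]
      rel_mset_rel_prod_map[OF MatchCmp.IH(3)]]
    by auto
next
  case (MatchFail b b' D D' n a p mu)
  then show ?case
    using par.MatchFail[OF MatchFail.IH(1) rel_mset_rel_prod_map[OF MatchFail.IH(2)]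
      F.failure_pair_map[OF MatchFail.hyps(2)]]
    by auto
next
  case (ResOk b b' \<sigma> \<sigma>' n)
  have "fmdom' \<sigma>' = {..<n}"
    using fmrel_fmdom'_eq[OF ResOk.IH(2)] ResOk.hyps(2) by simp
  then show ?case
    using par.ResOk[OF ResOk.IH(1) fmrel_fmmap[OF ResOk.IH(2)]] ResOk.hyps(2)
    by (simp add: F.map_inst G.map_inst)
qed (auto intro: par.intros)

end

lemma par_shiftV:
  assumes "pure_closed 0 0 bt" and "par bt t t'"
  shows "par bt (shiftV k c t) (shiftV k c t')"
proof -
  interpret par_map bt "\<lambda>_ i. i" "\<lambda>cv _. shiftV k cv" "\<lambda>cv _. shiftV k cv"
    by unfold_locales (simp_all add: shiftV_closed[OF assms(1)] shiftV_inst par.Id)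
  show ?thesis by (rule par_map[OF assms(2)])
qed

lemma par_shiftM:
  assumes "pure_closed 0 0 bt" and "par bt t t'"
  shows "par bt (shiftM k c t) (shiftM k c t')"
proof -
  interpret par_map bt "\<lambda>cm i. if i < cm then i else i + k" "\<lambda>_ cm. shiftM k cm" "\<lambda>_ cm. shiftM k cm"
    by unfold_locales (auto simp: shiftM_closed[OF assms(1)] shiftM_inst par.Id inj_on_def)
  show ?thesis by (rule par_map[OF assms(2)])
qed

lemma par_substV:
  assumes "pure_closed 0 0 bt" and "\<And>i. i < m \<Longrightarrow> par bt (s i) (s' i)" and "par bt t t'"
  shows "par bt (substV cv cm m s t) (substV cv cm m s' t')"
proof -
  interpret par_map bt "\<lambda>_ i. i" "\<lambda>cv cm. substV cv cm m s" "\<lambda>cv cm. substV cv cm m s'"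
    by unfold_locales
      (auto simp: substV_closed[OF assms(1)] substV_inst
        intro!: par.Id par_shiftM[OF assms(1)] par_shiftV[OF assms(1)] assms(2))
  show ?thesis using par_map[OF assms(3)] .
qed

lemma par_inst:
  assumes "pure_closed 0 0 bt" and "par bt b b'" and "fmrel (par bt) \<sigma> \<sigma>'" and "fmdom' \<sigma> = {..<n}"
  shows "par bt (inst n \<sigma> b) (inst n \<sigma>' b')"
  unfolding inst_def
proof (rule par_substV[OF assms(1) _ assms(2)])
  fix i assume "i < n"
  then have "i \<in> fmdom' \<sigma>" using assms(4) by simp
  then show "par bt (the (fmlookup \<sigma> i)) (the (fmlookup \<sigma>' i))"
    using assms(3) by (auto simp: fmlookup_dom'_iff fmrel_iff option.rel_sel)
qed

section \<open>The diamond property\<close>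

lemma diamond_at_Var: "diamond_at (par bt) (Var x)"
  unfolding diamond_at_def by (auto dest!: par_VarD intro: par.Id)

lemma diamond_at_Mat: "diamond_at (par bt) (Mat x)"
  unfolding diamond_at_def by (auto dest!: par_MatD intro: par.Id)

lemma diamond_at_Cmp_iff:
  "diamond_at (par bt) (Cmp a b) \<longleftrightarrow> diamond_at (par bt) a \<and> diamond_at (par bt) b"
  by (rule diamond_at_congruence_iff) (auto elim: par_CmpE intro: par.CgrCmp par.Id)

lemma diamond_at_Abs_iff:
  "diamond_at (par bt) (Abs n p b) \<longleftrightarrow> diamond_at (par bt) p \<and> diamond_at (par bt) b"
  by (rule diamond_at_congruence_iff) (auto elim: par_AbsE intro: par.CgrAbs par.Id)

lemma dunion_None [simp]: "dunion None m = None"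
  by (simp add: dunion_def)

lemma dunion_swap: "dunion (dunion m (Some A)) (Some B) = dunion (dunion m (Some B)) (Some A)"
proof (cases m)
  case (Some s)
  show ?thesis
  proof (cases "fmdom' s \<inter> fmdom' A = {} \<and> fmdom' s \<inter> fmdom' B = {} \<and> fmdom' A \<inter> fmdom' B = {}")
    case True
    then have "s ++\<^sub>f A ++\<^sub>f B = s ++\<^sub>f B ++\<^sub>f A"
      by (intro fmap_ext) (auto simp: fmdom'_alt_def)
    then show ?thesis using Some True by (auto simp: dunion_def)
  qed (use Some in \<open>auto simp: dunion_def\<close>)
qed simp

lemma par_match_dunion:
  assumes "par_match bt m m'" and "par bt a a'"
  shows "par_match bt (dunion m (Some (fmupd x a fmempty))) (dunion m' (Some (fmupd x a' fmempty)))"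
proof (cases m)
  case (Some s)
  then obtain s' where s': "m' = Some s'" "fmrel (par bt) s s'" using assms(1) by (cases m') auto
  have "fmrel (par bt) (s ++\<^sub>f fmupd x a fmempty) (s' ++\<^sub>f fmupd x a' fmempty)"
    using s'(2) assms(2) by (intro fmrel_addI fmrel_upd) (auto intro: fmap.rel_refl)
  then show ?thesis using Some s' fmrel_fmdom'_eq[OF s'(2)] by (auto simp: dunion_def)
qed (use assms in \<open>auto simp: dunion_def\<close>)

text \<open>The Match rules of par, each firing on one pair P of a matching: f is the effect on the
  decided match and N are the pairs that replace P.\<close>

inductive match_pair_step ::
  "trm \<Rightarrow> nat \<Rightarrow> trm \<times> trm \<Rightarrow> (decided_match \<Rightarrow> decided_match) \<Rightarrow> (trm \<times> trm) multiset \<Rightarrow> bool"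
  for bt :: trm where
  bind: "par bt a a' \<Longrightarrow> x < n \<Longrightarrow>
    match_pair_step bt n (a, Mat x) (\<lambda>m. dunion m (Some (fmupd x a' fmempty))) {#}"
| mat: "n \<le> x \<Longrightarrow> match_pair_step bt n (Mat (x - n), Mat x) id {#}"
| cmp: "par bt a1 a1' \<Longrightarrow> par bt a2 a2' \<Longrightarrow> par bt p1 p1' \<Longrightarrow> par bt p2 p2' \<Longrightarrow>
    match_pair_step bt n (Cmp a1 a2, Cmp p1 p2) id {#(a1', p1'), (a2', p2')#}"
| fail: "failure_pair n P \<Longrightarrow> match_pair_step bt n P (\<lambda>_. None) {#}"

inductive match_par ::
  "trm \<Rightarrow> nat \<Rightarrow> decided_match \<Rightarrow> (trm \<times> trm) multiset \<Rightarrow> decided_match \<Rightarrow> (trm \<times> trm) multiset \<Rightarrow> bool"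
  for bt :: trm where
  cgr: "par_match bt mu mu' \<Longrightarrow> par_pairs bt D D' \<Longrightarrow> match_par bt n mu D mu' D'"
| step: "match_pair_step bt n P f N \<Longrightarrow> par_match bt mu mu' \<Longrightarrow> par_pairs bt D D' \<Longrightarrow>
    match_par bt n mu (add_mset P D) (f mu') (N + D')"

lemma match_par_stepI:
  "match_pair_step bt n P f N \<Longrightarrow> par_match bt mu mu' \<Longrightarrow> par_pairs bt D D' \<Longrightarrow>
   D0 = add_mset P D \<Longrightarrow> mu0 = f mu' \<Longrightarrow> D0' = N + D' \<Longrightarrow> match_par bt n mu D0 mu0 D0'"
  using match_par.step by blast

lemma par_Mtch_match_par:
  assumes "par bt b b'" and "match_par bt n mu D mu' D'"
  shows "par bt (Mtch b n mu D) (Mtch b' n mu' D')"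
  using assms(2)
proof cases
  case cgr
  then show ?thesis using assms(1) by (auto intro: par.CgrMtch)
next
  case (step P f N mu0 D0 D0')
  from \<open>match_pair_step bt n P f N\<close> show ?thesis
  proof cases
    case (cmp a1 a1' a2 a2' p1 p1' p2 p2')
    then show ?thesis using step assms(1) par.MatchCmp by auto
  next
    case fail
    then show ?thesis using step assms(1) par.MatchFail[where a = "fst P" and p = "snd P"] by auto
  qed (use step assms(1) in \<open>auto intro: par.MatchBind par.MatchMat\<close>)
qed

lemma match_pair_step_None: "match_pair_step bt n P f N \<Longrightarrow> f None = None"
  by (erule match_pair_step.cases) auto

lemma match_pair_step_commute:
  "match_pair_step bt n P f N \<Longrightarrow> match_pair_step bt n Q g M \<Longrightarrow> f (g m) = g (f m)"
  by (erule match_pair_step.cases; erule match_pair_step.cases) (auto simp: dunion_swap)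

lemma not_failure_pair_bound: "x < n \<Longrightarrow> \<not> failure_pair n (a, Mat x)"
  by (cases "(n, (a, Mat x))" rule: failure_pair.cases) auto

lemma diamond_at_par_pairs:
  "(\<And>a p. (a, p) \<in># D \<Longrightarrow> diamond_at (par bt) a \<and> diamond_at (par bt) p) \<Longrightarrow>
   diamond_at (par_pairs bt) D"
  by (metis diamond_at_rel_mset diamond_at_rel_prod surj_pair)

lemma par_pairs_pair: "par bt a a' \<Longrightarrow> par bt p p' \<Longrightarrow> par bt b b' \<Longrightarrow> par bt q q' \<Longrightarrow>
  par_pairs bt {#(a, p), (b, q)#} {#(a', p'), (b', q')#}"
  by (auto intro!: rel_mset_Plus rel_mset_Zero)

lemma match_pair_step_par:
  assumes "match_pair_step bt n (a, p) f N" and "par bt a a1" and "par bt p p1"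
    and "diamond_at (par bt) a" and "diamond_at (par bt) p"
  shows "\<exists>f1 N1. match_pair_step bt n (a1, p1) f1 N1 \<and> par_pairs bt N N1 \<and>
    rel_fun (par_match bt) (par_match bt) f f1"
  using assms(1)
proof cases
  case (bind a' x)
  obtain a3 where "par bt a' a3" "par bt a1 a3" using diamond_atD[OF assms(4) \<open>par bt a a'\<close> assms(2)] by blast
  then show ?thesis using bind assms(3)
    by (intro exI[of _ "\<lambda>m. dunion m (Some (fmupd x a3 fmempty))"] exI[of _ "{#}"])
      (auto dest!: par_MatD intro: match_pair_step.bind par_match_dunion)
next
  case (mat x)
  then have "a1 = a" "p1 = p" using assms(2,3) by (auto dest: par_MatD)
  then show ?thesis using mat
    by (intro exI[of _ id] exI[of _ "{#}"]) (simp add: match_pair_step.mat rel_fun_def)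
next
  case (cmp b1 b1' b2 b2' q1 q1' q2 q2')
  obtain c1 c2 r1 r2 where a1: "a1 = Cmp c1 c2" "par bt b1 c1" "par bt b2 c2"
    and p1: "p1 = Cmp r1 r2" "par bt q1 r1" "par bt q2 r2"
    using assms(2,3) cmp by (auto elim!: par_CmpE)
  have d: "diamond_at (par bt) b1" "diamond_at (par bt) b2" "diamond_at (par bt) q1" "diamond_at (par bt) q2"
    using assms(4,5) cmp by (simp_all add: diamond_at_Cmp_iff)
  obtain e1 where "par bt b1' e1" "par bt c1 e1" using diamond_atD[OF d(1)] cmp a1 by blast
  moreover obtain e2 where "par bt b2' e2" "par bt c2 e2" using diamond_atD[OF d(2)] cmp a1 by blast
  moreover obtain s1 where "par bt q1' s1" "par bt r1 s1" using diamond_atD[OF d(3)] cmp p1 by blast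
  moreover obtain s2 where "par bt q2' s2" "par bt r2 s2" using diamond_atD[OF d(4)] cmp p1 by blast
  ultimately show ?thesis using cmp a1 p1
    by (intro exI[of _ id] exI[of _ "{#(e1, s1), (e2, s2)#}"])
      (auto intro: match_pair_step.cmp par_pairs_pair simp: rel_fun_def)
next
  case fail
  then have "failure_pair n (a1, p1)" using assms(2,3) failure_pair_par by blast
  then show ?thesis using fail
    by (intro exI[of _ "\<lambda>_. None"] exI[of _ "{#}"]) (simp add: match_pair_step.fail rel_fun_def)
qed

lemma match_pair_step_diamond:
  assumes "match_pair_step bt n (a, p) f1 N1" and "match_pair_step bt n (a, p) f2 N2"
    and "diamond_at (par bt) a" and "diamond_at (par bt) p"
  shows "\<exists>f3 N3. rel_fun (par_match bt) (par_match bt) f1 f3 \<and> rel_fun (par_match bt) (par_match bt) f2 f3 \<and>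
    par_pairs bt N1 N3 \<and> par_pairs bt N2 N3"
  using assms(1)
proof cases
  case (bind a1 x)
  note step1 = this
  from assms(2) show ?thesis
  proof cases
    case (bind a2)
    obtain a3 where "par bt a1 a3" "par bt a2 a3" using diamond_atD[OF assms(3)] step1 bind by blast
    then show ?thesis using step1 bind
      by (intro exI[of _ "\<lambda>m. dunion m (Some (fmupd x a3 fmempty))"] exI[of _ "{#}"])
        (auto simp: rel_fun_def intro: par_match_dunion)
  qed (use step1 in \<open>auto simp: not_failure_pair_bound\<close>)
next
  case mat
  from assms(2) show ?thesis
    by cases (use mat in \<open>auto simp: rel_fun_def\<close>)
next
  case (cmp b1 b1' b2 b2' q1 q1' q2 q2')
  note step1 = this
  have "diamond_at (par_pairs bt) {#(b1, q1), (b2, q2)#}"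
    using assms(3,4) cmp by (auto simp: diamond_at_Cmp_iff intro!: diamond_at_par_pairs)
  from assms(2) show ?thesis
  proof cases
    case (cmp c1 c2 r1 r2)
    have "par_pairs bt {#(b1, q1), (b2, q2)#} N1" "par_pairs bt {#(b1, q1), (b2, q2)#} N2"
      using step1 cmp by (auto intro: par_pairs_pair)
    then obtain N3 where "par_pairs bt N1 N3" "par_pairs bt N2 N3"
      using diamond_atD[OF \<open>diamond_at (par_pairs bt) _\<close>] by metis
    then show ?thesis using step1 cmp by (auto simp: rel_fun_def)
  qed (use step1 in auto)
next
  case fail
  from assms(2) show ?thesis
    by cases (use fail in \<open>auto simp: rel_fun_def not_failure_pair_bound\<close>)
qed

lemma match_par_step_cgr_join:
  assumes "match_pair_step bt n P f N" and "par_match bt mu mu'" and "par_pairs bt D D'"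
    and "par_match bt mu mu1" and "par_pairs bt (add_mset P D) D1"
    and "diamond_at (par_match bt) mu"
    and "\<And>a p. (a, p) \<in># add_mset P D \<Longrightarrow> diamond_at (par bt) a \<and> diamond_at (par bt) p"
  shows "\<exists>mu3 D3. match_par bt n (f mu') (N + D') mu3 D3 \<and> match_par bt n mu1 D1 mu3 D3"
proof -
  obtain a p where P: "P = (a, p)" by fastforce
  obtain a1 p1 E1 where D1: "D1 = add_mset (a1, p1) E1" "par bt a a1" "par bt p p1" "par_pairs bt D E1"
    using msed_rel_invL[OF assms(5)] P by fastforce
  obtain f1 N1 where step1: "match_pair_step bt n (a1, p1) f1 N1" "par_pairs bt N N1"
      "rel_fun (par_match bt) (par_match bt) f f1"
    using match_pair_step_par[OF assms(1)[unfolded P] D1(2,3)] assms(7) P by auto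
  obtain mu3 where mu3: "par_match bt mu' mu3" "par_match bt mu1 mu3"
    using diamond_atD[OF assms(6,2,4)] by blast
  have "diamond_at (par_pairs bt) D" using assms(7) by (auto intro!: diamond_at_par_pairs)
  then obtain D3 where D3: "par_pairs bt D' D3" "par_pairs bt E1 D3"
    using assms(3) D1(4) by (blast dest: diamond_atD)
  show ?thesis using step1 D1(1) mu3 D3
    by (intro exI[of _ "f1 mu3"] exI[of _ "N1 + D3"])
      (auto simp: rel_fun_def intro: match_par.cgr match_par.step rel_mset_plus)
qed

lemma match_par_same_pair_join:
  assumes "match_pair_step bt n (a, p) f1 N1" and "match_pair_step bt n (a, p) f2 N2"
    and "par_match bt mu mu1" and "par_match bt mu mu2" and "par_pairs bt D D1" and "par_pairs bt D D2"
    and "diamond_at (par_match bt) mu"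
    and "\<And>b q. (b, q) \<in># add_mset (a, p) D \<Longrightarrow> diamond_at (par bt) b \<and> diamond_at (par bt) q"
  shows "\<exists>mu3 D3. match_par bt n (f1 mu1) (N1 + D1) mu3 D3 \<and> match_par bt n (f2 mu2) (N2 + D2) mu3 D3"
proof -
  obtain f3 N3 where f3: "rel_fun (par_match bt) (par_match bt) f1 f3"
      "rel_fun (par_match bt) (par_match bt) f2 f3" "par_pairs bt N1 N3" "par_pairs bt N2 N3"
    using match_pair_step_diamond[OF assms(1,2)] assms(8) by force
  obtain mu3 where mu3: "par_match bt mu1 mu3" "par_match bt mu2 mu3"
    using diamond_atD[OF assms(7,3,4)] by blast
  have "diamond_at (par_pairs bt) D" using assms(8) by (auto intro!: diamond_at_par_pairs)
  then obtain D3 where "par_pairs bt D1 D3" "par_pairs bt D2 D3"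
    using assms(5,6) by (blast dest: diamond_atD)
  then show ?thesis using mu3 f3
    by (intro exI[of _ "f3 mu3"] exI[of _ "N3 + D3"])
      (auto simp: rel_fun_def intro!: match_par.cgr rel_mset_plus)
qed

lemma match_par_other_pairs_join:
  assumes "match_pair_step bt n (a, p) f1 N1" and "match_pair_step bt n (b, q) f2 N2"
    and "par_match bt mu mu1" and "par_match bt mu mu2"
    and "par_pairs bt (add_mset (b, q) K) D1" and "par_pairs bt (add_mset (a, p) K) D2"
    and "diamond_at (par_match bt) mu"
    and "\<And>c r. (c, r) \<in># add_mset (a, p) (add_mset (b, q) K) \<Longrightarrow> diamond_at (par bt) c \<and> diamond_at (par bt) r"
  shows "\<exists>mu3 D3. match_par bt n (f1 mu1) (N1 + D1) mu3 D3 \<and> match_par bt n (f2 mu2) (N2 + D2) mu3 D3"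
proof -
  obtain b1 q1 K1 where D1: "D1 = add_mset (b1, q1) K1" "par bt b b1" "par bt q q1" "par_pairs bt K K1"
    using msed_rel_invL[OF assms(5)] by fastforce
  obtain a2 p2 K2 where D2: "D2 = add_mset (a2, p2) K2" "par bt a a2" "par bt p p2" "par_pairs bt K K2"
    using msed_rel_invL[OF assms(6)] by fastforce
  obtain f1' M1 where s1: "match_pair_step bt n (a2, p2) f1' M1" "par_pairs bt N1 M1"
      "rel_fun (par_match bt) (par_match bt) f1 f1'"
    using match_pair_step_par[OF assms(1) D2(2,3)] assms(8) by force
  obtain f2' M2 where s2: "match_pair_step bt n (b1, q1) f2' M2" "par_pairs bt N2 M2"
      "rel_fun (par_match bt) (par_match bt) f2 f2'"
    using match_pair_step_par[OF assms(2) D1(2,3)] assms(8) by force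
  obtain mu3 where mu3: "par_match bt mu1 mu3" "par_match bt mu2 mu3"
    using diamond_atD[OF assms(7,3,4)] by blast
  have "diamond_at (par_pairs bt) K" using assms(8) by (auto intro!: diamond_at_par_pairs)
  then obtain K3 where K3: "par_pairs bt K1 K3" "par_pairs bt K2 K3"
    using D1(4) D2(4) by (blast dest: diamond_atD)
  have "match_par bt n (f1 mu1) (N1 + D1) (f2' (f1' mu3)) (M2 + (M1 + K3))"
    using s1 mu3 K3 D1(1)
    by (intro match_par_stepI[OF s2(1)]) (auto simp: rel_fun_def intro: rel_mset_plus)
  moreover have "match_par bt n (f2 mu2) (N2 + D2) (f1' (f2' mu3)) (M1 + (M2 + K3))"
    using s2 mu3 K3 D2(1)
    by (intro match_par_stepI[OF s1(1)]) (auto simp: rel_fun_def intro: rel_mset_plus)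
  moreover have "f1' (f2' mu3) = f2' (f1' mu3)" by (rule match_pair_step_commute[OF s1(1) s2(1)])
  ultimately show ?thesis by (metis add.left_commute)
qed

lemma match_par_diamond:
  assumes "match_par bt n mu D mu1 D1" and "match_par bt n mu D mu2 D2"
    and "diamond_at (par_match bt) mu"
    and "\<And>a p. (a, p) \<in># D \<Longrightarrow> diamond_at (par bt) a \<and> diamond_at (par bt) p"
  shows "\<exists>mu3 D3. match_par bt n mu1 D1 mu3 D3 \<and> match_par bt n mu2 D2 mu3 D3"
  using assms(1)
proof cases
  case cgr
  note cgr1 = this
  from assms(2) show ?thesis
  proof cases
    case cgr
    obtain mu3 where "par_match bt mu1 mu3" "par_match bt mu2 mu3"
      using diamond_atD[OF assms(3)] cgr1 cgr by blast
    moreover have "diamond_at (par_pairs bt) D" using assms(4) by (auto intro!: diamond_at_par_pairs)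
    then obtain D3 where "par_pairs bt D1 D3" "par_pairs bt D2 D3"
      using cgr1 cgr by (blast dest: diamond_atD)
    ultimately show ?thesis by (blast intro: match_par.cgr)
  next
    case (step P f N mu' D0 D0')
    then show ?thesis using match_par_step_cgr_join[of bt n P f N mu mu' D0 D0' mu1 D1] cgr1 assms(3,4)
      by blast
  qed
next
  case (step P f1 N1 mu1' D0 D0')
  note step1 = this
  from assms(2) show ?thesis
  proof cases
    case cgr
    then show ?thesis using match_par_step_cgr_join[of bt n P f1 N1 mu mu1' D0 D0' mu2 D2] step1 assms(3,4)
      by blast
  next
    case (step Q f2 N2 mu2' E0 E0')
    obtain a p b q where P: "P = (a, p)" and Q: "Q = (b, q)" by fastforce
    have "add_mset P D0 = add_mset Q E0" using step1 step by simp
    then consider "P = Q" "D0 = E0" | K where "D0 = add_mset Q K" "E0 = add_mset P K"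
      by (auto simp: add_eq_conv_ex)
    then show ?thesis
    proof cases
      case 1
      then show ?thesis
        using match_par_same_pair_join[of bt n a p f1 N1 f2 N2 mu mu1' mu2' D0 D0' E0'] step1 step P Q assms(3,4)
        by auto
    next
      case (2 K)
      then show ?thesis
        using match_par_other_pairs_join[of bt n a p f1 N1 b q f2 N2 mu mu1' mu2' K D0' E0'] step1 step P Q assms(3,4)
        by auto
    qed
  qed
qed

definition match_fails :: "nat \<Rightarrow> decided_match \<Rightarrow> (trm \<times> trm) multiset \<Rightarrow> bool" where
  "match_fails n mu D \<longleftrightarrow> mu = None \<or> (\<exists>\<sigma>. mu = Some \<sigma> \<and> D = {#} \<and> fmdom' \<sigma> \<noteq> {..<n})"

lemma par_MtchE:
  assumes "par bt (Mtch b n mu D) t"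
  obtains (Match) b' mu' D' where "t = Mtch b' n mu' D'" "par bt b b'" "match_par bt n mu D mu' D'"
  | (Res) \<sigma> \<sigma>' b' where "mu = Some \<sigma>" "D = {#}" "fmdom' \<sigma> = {..<n}" "par bt b b'"
      "fmrel (par bt) \<sigma> \<sigma>'" "t = inst n \<sigma>' b'"
  | (Fail) "t = bt" "match_fails n mu D"
  using assms
proof cases
  case Id
  then show ?thesis using Match by (simp add: par.Id match_par.cgr)
next
  case (CgrMtch b' mu' D')
  then show ?thesis using Match match_par.cgr by blast
next
  case (MatchBind b' mu' a a' D0 D0' x)
  then have "match_par bt n mu D (dunion mu' (Some (fmupd x a' fmempty))) D0'"
    by (intro match_par_stepI[OF match_pair_step.bind]) auto
  then show ?thesis using MatchBind Match by blast
next
  case (MatchMat b' mu' D0 D0' x)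
  then have "match_par bt n mu D mu' D0'"
    by (intro match_par_stepI[OF match_pair_step.mat]) auto
  then show ?thesis using MatchMat Match by blast
next
  case (MatchCmp b' mu' D0 D0' a1 a1' a2 a2' p1 p1' p2 p2')
  then have "match_par bt n mu D mu' (add_mset (a1', p1') (add_mset (a2', p2') D0'))"
    by (intro match_par_stepI[OF match_pair_step.cmp]) auto
  then show ?thesis using MatchCmp Match by blast
next
  case (MatchFail b' D0 D0' a p)
  then have "match_par bt n mu D None D0'"
    by (intro match_par_stepI[OF match_pair_step.fail par_match_refl]) auto
  then show ?thesis using MatchFail Match by blast
qed (use Res Fail in \<open>auto simp: match_fails_def\<close>)

lemma match_par_Some_empty:
  "match_par bt n (Some \<sigma>) {#} mu' D' \<Longrightarrow> \<exists>\<sigma>'. mu' = Some \<sigma>' \<and> D' = {#} \<and> fmrel (par bt) \<sigma> \<sigma>'"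
  by (erule match_par.cases) (auto simp: option_rel_Some1)

lemma match_par_None: "match_par bt n None D mu' D' \<Longrightarrow> mu' = None"
  by (erule match_par.cases) (auto dest: match_pair_step_None)

lemma match_fails_match_par: "match_par bt n mu D mu' D' \<Longrightarrow> match_fails n mu D \<Longrightarrow> match_fails n mu' D'"
  unfolding match_fails_def by (metis match_par_None match_par_Some_empty fmrel_fmdom'_eq)

lemma match_fails_par_bot: "match_fails n mu D \<Longrightarrow> par bt (Mtch b n mu D) bt"
  unfolding match_fails_def by (auto intro: par.ResDom par.ResBot)

lemma par_Res_join:
  assumes "pure_closed 0 0 bt" and "diamond_at (par bt) b" and "diamond_at (fmrel (par bt)) \<sigma>"
    and "fmdom' \<sigma> = {..<n}" and "par bt b b1" and "par bt b b2"
    and "fmrel (par bt) \<sigma> \<sigma>1" and "fmrel (par bt) \<sigma> \<sigma>2"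
  obtains b3 \<sigma>3 where "par bt (Mtch b1 n (Some \<sigma>1) {#}) (inst n \<sigma>3 b3)"
    "par bt (inst n \<sigma>1 b1) (inst n \<sigma>3 b3)" "par bt (inst n \<sigma>2 b2) (inst n \<sigma>3 b3)"
proof -
  obtain b3 where b3: "par bt b1 b3" "par bt b2 b3" using diamond_atD[OF assms(2,5,6)] by blast
  obtain \<sigma>3 where \<sigma>3: "fmrel (par bt) \<sigma>1 \<sigma>3" "fmrel (par bt) \<sigma>2 \<sigma>3" using diamond_atD[OF assms(3,7,8)] by blast
  have "fmdom' \<sigma>1 = {..<n}" "fmdom' \<sigma>2 = {..<n}"
    using fmrel_fmdom'_eq[OF assms(7)] fmrel_fmdom'_eq[OF assms(8)] assms(4) by simp_all
  then show ?thesis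
    using that par.ResOk[OF b3(1) \<sigma>3(1)] par_inst[OF assms(1) b3(1) \<sigma>3(1)] par_inst[OF assms(1) b3(2) \<sigma>3(2)]
    by blast
qed

lemma diamond_at_Mtch:
  assumes "pure_closed 0 0 bt" and "diamond_at (par bt) b"
    and "\<And>\<sigma>. \<sigma> \<in> set_option mu \<Longrightarrow> diamond_at (fmrel (par bt)) \<sigma>"
    and "\<And>a p. (a, p) \<in># D \<Longrightarrow> diamond_at (par bt) a \<and> diamond_at (par bt) p"
  shows "diamond_at (par bt) (Mtch b n mu D)"
  unfolding diamond_at_def
proof (intro allI impI)
  have mu: "diamond_at (par_match bt) mu" using assms(3) by (rule diamond_at_rel_option)
  have Match_Res: "\<exists>t3. par bt (Mtch b1 n mu1 D1) t3 \<and> par bt (inst n \<sigma>2 b2) t3"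
    if M: "par bt b b1" "match_par bt n mu D mu1 D1" "mu = Some \<sigma>" "D = {#}" "fmdom' \<sigma> = {..<n}"
      "par bt b b2" "fmrel (par bt) \<sigma> \<sigma>2" for b1 mu1 D1 \<sigma> b2 \<sigma>2
  proof -
    obtain \<sigma>1 where "mu1 = Some \<sigma>1" "D1 = {#}" "fmrel (par bt) \<sigma> \<sigma>1"
      using match_par_Some_empty M(2-4) by blast
    moreover have "diamond_at (fmrel (par bt)) \<sigma>" using assms(3) M(3) by simp
    ultimately show ?thesis
      using par_Res_join[OF assms(1,2) _ M(5,1,6)] M(7) by metis
  qed
  fix t1 t2 assume t1: "par bt (Mtch b n mu D) t1" and t2: "par bt (Mtch b n mu D) t2"
  from t1 show "\<exists>t3. par bt t1 t3 \<and> par bt t2 t3"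
  proof (cases rule: par_MtchE)
    case (Match b1 mu1 D1)
    from t2 show ?thesis
    proof (cases rule: par_MtchE)
      case (Match b2 mu2 D2)
      obtain b3 where "par bt b1 b3" "par bt b2 b3" using diamond_atD[OF assms(2)] Match(2) \<open>par bt b b1\<close> by blast
      moreover obtain mu3 D3 where "match_par bt n mu1 D1 mu3 D3" "match_par bt n mu2 D2 mu3 D3"
        using match_par_diamond[OF _ Match(3) mu assms(4)] \<open>match_par bt n mu D mu1 D1\<close> by blast
      ultimately show ?thesis using Match \<open>t1 = _\<close> by (blast intro: par_Mtch_match_par)
    next
      case Res
      then show ?thesis using Match_Res \<open>t1 = _\<close> \<open>par bt b b1\<close> \<open>match_par bt n mu D mu1 D1\<close> by blast
    next
      case Fail
      then show ?thesis using \<open>t1 = _\<close> \<open>match_par bt n mu D mu1 D1\<close>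
        by (blast intro: par.Id match_fails_par_bot match_fails_match_par)
    qed
  next
    case (Res \<sigma> \<sigma>1 b1)
    from t2 show ?thesis
    proof (cases rule: par_MtchE)
      case Match
      then show ?thesis using Match_Res Res by blast
    next
      case (Res \<sigma>' \<sigma>2 b2)
      have "diamond_at (fmrel (par bt)) \<sigma>" using assms(3) \<open>mu = Some \<sigma>\<close> by simp
      then show ?thesis
        using par_Res_join[OF assms(1,2)] Res \<open>mu = Some \<sigma>\<close> \<open>fmdom' \<sigma> = _\<close> \<open>par bt b b1\<close>
          \<open>fmrel (par bt) \<sigma> \<sigma>1\<close> \<open>t1 = _\<close>
        by (metis option.inject)
    next
      case Fail
      then show ?thesis using Res by (simp add: match_fails_def)
    qed
  next
    case Fail
    from t2 show ?thesis
    proof (cases rule: par_MtchE)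
      case Match
      then show ?thesis using Fail by (blast intro: par.Id match_fails_par_bot match_fails_match_par)
    next
      case Res
      then show ?thesis using Fail by (simp add: match_fails_def)
    next
      case Fail
      then show ?thesis using \<open>t1 = bt\<close> by (blast intro: par.Id)
    qed
  qed
qed

lemma par_pairs_single: "par bt a a' \<Longrightarrow> par bt p p' \<Longrightarrow> par_pairs bt {#(a, p)#} {#(a', p')#}"
  by (auto intro!: rel_mset_Plus rel_mset_Zero)

lemma par_App_Cgr_join:
  assumes "diamond_at (par bt) u" and "diamond_at (par bt) v"
    and "par bt u u1" and "par bt v v1" and "par bt (App u v) t2"
  shows "\<exists>t3. par bt (App u1 v1) t3 \<and> par bt t2 t3"
  using assms(5)
proof (cases rule: par_AppE)
  case (Cgr u2 v2)
  obtain u3 where "par bt u1 u3" "par bt u2 u3" using diamond_atD[OF assms(1,3)] Cgr by blast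
  moreover obtain v3 where "par bt v1 v3" "par bt v2 v3" using diamond_atD[OF assms(2,4)] Cgr by blast
  ultimately show ?thesis using Cgr by (blast intro: par.CgrApp)
next
  case (Init n p b p2 b2 v2)
  obtain p1 b1 where u1: "u1 = Abs n p1 b1" "par bt p p1" "par bt b b1"
    using assms(3) Init by (auto elim: par_AbsE)
  have dp: "diamond_at (par bt) p" "diamond_at (par bt) b" using assms(1) Init by (simp_all add: diamond_at_Abs_iff)
  obtain p3 where "par bt p1 p3" "par bt p2 p3" using diamond_atD[OF dp(1) u1(2)] Init by blast
  moreover obtain b3 where "par bt b1 b3" "par bt b2 b3" using diamond_atD[OF dp(2) u1(3)] Init by blast
  moreover obtain v3 where "par bt v1 v3" "par bt v2 v3" using diamond_atD[OF assms(2,4)] Init by blast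
  ultimately show ?thesis using Init u1
    by (intro exI[of _ "Mtch b3 n (Some fmempty) {#(v3, p3)#}"])
      (auto intro: par.Init par.CgrMtch par_pairs_single)
next
  case (StructMat x v2)
  obtain v3 where "par bt v1 v3" "par bt v2 v3" using diamond_atD[OF assms(2,4)] StructMat by blast
  then show ?thesis using StructMat assms(3)
    by (auto dest!: par_MatD intro: par.StructMat par.CgrCmp par.Id)
next
  case (StructCmp w1 w2 w1' w2' v2)
  obtain w1'' w2'' where u1: "u1 = Cmp w1'' w2''" "par bt w1 w1''" "par bt w2 w2''"
    using assms(3) StructCmp by (auto elim: par_CmpE)
  have dw: "diamond_at (par bt) w1" "diamond_at (par bt) w2"
    using assms(1) StructCmp by (simp_all add: diamond_at_Cmp_iff)
  obtain c1 where "par bt w1'' c1" "par bt w1' c1" using diamond_atD[OF dw(1) u1(2)] StructCmp by blast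
  moreover obtain c2 where "par bt w2'' c2" "par bt w2' c2" using diamond_atD[OF dw(2) u1(3)] StructCmp by blast
  moreover obtain v3 where "par bt v1 v3" "par bt v2 v3" using diamond_atD[OF assms(2,4)] StructCmp by blast
  ultimately show ?thesis using StructCmp u1
    by (intro exI[of _ "Cmp (Cmp c1 c2) v3"]) (auto intro: par.StructCmp par.CgrCmp)
qed

lemma diamond_at_App:
  assumes "diamond_at (par bt) u" and "diamond_at (par bt) v"
  shows "diamond_at (par bt) (App u v)"
  unfolding diamond_at_def
proof (intro allI impI)
  fix t1 t2 assume t1: "par bt (App u v) t1" and t2: "par bt (App u v) t2"
  from t1 show "\<exists>t3. par bt t1 t3 \<and> par bt t2 t3"
  proof (cases rule: par_AppE)
    case Cgr
    then show ?thesis using par_App_Cgr_join[OF assms Cgr(2,3) t2] by blast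
  next
    case (Init n p b p1 b1 v1)
    from t2 show ?thesis
    proof (cases rule: par_AppE)
      case Cgr
      then show ?thesis using par_App_Cgr_join[OF assms Cgr(2,3) t1] by blast
    next
      case (Init n' p' b' p2 b2 v2)
      then have "n' = n" "p' = p" "b' = b" using \<open>u = Abs n p b\<close> by simp_all
      have dp: "diamond_at (par bt) p" "diamond_at (par bt) b"
        using assms(1) \<open>u = Abs n p b\<close> by (simp_all add: diamond_at_Abs_iff)
      obtain p3 where "par bt p1 p3" "par bt p2 p3"
        using diamond_atD[OF dp(1)] \<open>par bt p p1\<close> Init \<open>p' = p\<close> by blast
      moreover obtain b3 where "par bt b1 b3" "par bt b2 b3"
        using diamond_atD[OF dp(2)] \<open>par bt b b1\<close> Init \<open>b' = b\<close> by blast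
      moreover obtain v3 where "par bt v1 v3" "par bt v2 v3"
        using diamond_atD[OF assms(2)] \<open>par bt v v1\<close> Init by blast
      ultimately show ?thesis using \<open>t1 = _\<close> Init \<open>n' = n\<close>
        by (intro exI[of _ "Mtch b3 n (Some fmempty) {#(v3, p3)#}"])
          (auto intro: par.CgrMtch par_pairs_single)
    qed (use Init in simp_all)
  next
    case (StructMat x v1)
    from t2 show ?thesis
    proof (cases rule: par_AppE)
      case Cgr
      then show ?thesis using par_App_Cgr_join[OF assms Cgr(2,3) t1] by blast
    next
      case (StructMat x' v2)
      obtain v3 where "par bt v1 v3" "par bt v2 v3"
        using diamond_atD[OF assms(2)] \<open>par bt v v1\<close> StructMat by blast
      then show ?thesis using \<open>t1 = _\<close> \<open>u = Mat x\<close> StructMat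
        by (auto intro: par.CgrCmp par.Id)
    qed (use StructMat in simp_all)
  next
    case (StructCmp w1 w2 w1' w2' v1)
    from t2 show ?thesis
    proof (cases rule: par_AppE)
      case Cgr
      then show ?thesis using par_App_Cgr_join[OF assms Cgr(2,3) t1] by blast
    next
      case (StructCmp z1 z2 z1' z2' v2)
      then have "z1 = w1" "z2 = w2" using \<open>u = Cmp w1 w2\<close> by simp_all
      have dw: "diamond_at (par bt) w1" "diamond_at (par bt) w2"
        using assms(1) \<open>u = Cmp w1 w2\<close> by (simp_all add: diamond_at_Cmp_iff)
      obtain c1 where "par bt w1' c1" "par bt z1' c1"
        using diamond_atD[OF dw(1)] \<open>par bt w1 w1'\<close> StructCmp \<open>z1 = w1\<close> by blast
      moreover obtain c2 where "par bt w2' c2" "par bt z2' c2"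
        using diamond_atD[OF dw(2)] \<open>par bt w2 w2'\<close> StructCmp \<open>z2 = w2\<close> by blast
      moreover obtain v3 where "par bt v1 v3" "par bt v2 v3"
        using diamond_atD[OF assms(2)] \<open>par bt v v1\<close> StructCmp by blast
      ultimately show ?thesis using \<open>t1 = _\<close> StructCmp
        by (intro exI[of _ "Cmp (Cmp c1 c2) v3"]) (auto intro: par.CgrCmp)
    qed (use StructCmp in simp_all)
  qed
qed

lemma diamond_at_par:
  assumes "pure_closed 0 0 bt"
  shows "diamond_at (par bt) t"
proof (induction t)
  case (Mtch b n mu D)
  show ?case
  proof (rule diamond_at_Mtch[OF assms Mtch.IH(1)])
    fix \<sigma> assume "\<sigma> \<in> set_option mu"
    then show "diamond_at (fmrel (par bt)) \<sigma>" using Mtch.IH(2) by (blast intro: diamond_at_fmrel)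
  next
    fix a p assume "(a, p) \<in># D"
    then show "diamond_at (par bt) a \<and> diamond_at (par bt) p" using Mtch.IH(3,4) by force
  qed
qed (simp_all add: diamond_at_Var diamond_at_Mat diamond_at_App diamond_at_Cmp_iff diamond_at_Abs_iff)

theorem lemma3:
  fixes bot t t1 t2 :: trm
  assumes "pure_closed 0 0 bot" and "pure_normal bot"
    and "par bot t t1" and "par bot t t2"
  shows "\<exists>t3. par bot t1 t3 \<and> par bot t2 t3"
  using diamond_atD[OF diamond_at_par[OF assms(1)] assms(3,4)] .

end
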